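(* For every integer $n\ge 1$, let \[ R'_n:=\sum_{k=n}^{\infty}\frac{(-1)^{k-1}}{k}. \] Then \begin{align*} R'_{n} =(-1)^{\,n-1}\,(2n-1)!\;\sum_{k=0}^{\infty}\frac{1}{16^{k}}\Bigg[&\frac{1}{(8k+1)_{2n}}+\frac{1}{(8k+2)_{2n}}+\frac{1}{2\,(8k+3)_{2n}}\\ &-\frac{1}{4\,(8k+5)_{2n}}-\frac{1}{4\,(8k+6)_{2n}}-\frac{1}{8\,(8k+7)_{2n}}\Bigg]. \end{align*}
   Context: For a real number $a$ and integer $m\ge 0$, $(a)_m$ denotes the rising factorial (Pochhammer symbol): $(a)_0:=1$ and $(a)_m:=a(a+1)\cdots(a+m-1)=\Gamma(a+m)/\Gamma(a)$. Note $R'_1=\log 2$. *)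

theory Defs
  imports "HOL-Analysis.Analysis"
begin

definition Rtail :: "nat \<Rightarrow> real" where
  "Rtail n = (\<Sum>j. (-1) ^ (n + j - 1) / real (n + j))"

definition bbp_term :: "nat \<Rightarrow> nat \<Rightarrow> real" where
  "bbp_term n k = (1 / 16 ^ k) *
     (  1 / pochhammer (8 * real k + 1) (2 * n)
      + 1 / pochhammer (8 * real k + 2) (2 * n)
      + 1 / (2 * pochhammer (8 * real k + 3) (2 * n))
      - 1 / (4 * pochhammer (8 * real k + 5) (2 * n))
      - 1 / (4 * pochhammer (8 * real k + 6) (2 * n))
      - 1 / (8 * pochhammer (8 * real k + 7) (2 * n)))"

end

theory Submission
  imports Defs
begin

text \<open>Write B(x, m) = (m-1)!/(x)_m. The n-th series is a combination of the values B(8k+j, 2n),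
  and the recurrence B(x, m+2) = B(x, m) - 2 B(x+1, m) + B(x+2, m) makes the termwise sum of the
  n-th and (n+1)-st series telescope in k, so that their sums T_n satisfy T_n + T_(n+1) = 1/n.
  Hence (-1)^(n-1) T_n and R'_n both have differences (-1)^(n-1)/n and tend to 0,
  so they coincide.\<close>

lemma suminf_shift_split_head:
  fixes f :: "nat \<Rightarrow> 'a::real_normed_vector"
  assumes "summable f"
  shows "(\<Sum>j. f (n + j)) = f n + (\<Sum>j. f (Suc n + j))"
proof -
  have "summable (\<lambda>j. f (n + j))"
    using summable_ignore_initial_segment[OF assms, of n] by (simp add: add.commute)
  from suminf_split_head[OF this] show ?thesis by simp
qed

lemma suminf_shift_tendsto_zero:
  fixes f :: "nat \<Rightarrow> 'a::real_normed_vector"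
  assumes "summable f"
  shows "(\<lambda>n. \<Sum>j. f (n + j)) \<longlonglongrightarrow> 0"
proof -
  have "(\<lambda>n. suminf f - (\<Sum>i<n. f i)) \<longlonglongrightarrow> suminf f - suminf f"
    by (intro tendsto_diff tendsto_const summable_LIMSEQ assms)
  moreover have "(\<Sum>j. f (n + j)) = suminf f - (\<Sum>i<n. f i)" for n
    using suminf_minus_initial_segment[OF assms, of n] by (simp add: add.commute)
  ultimately show ?thesis by simp
qed

lemma eq_if_same_differences_tendsto_zero:
  fixes a b :: "nat \<Rightarrow> 'a::real_normed_vector"
  assumes diff: "\<And>m. n \<le> m \<Longrightarrow> a m - a (Suc m) = b m - b (Suc m)"
    and "a \<longlonglongrightarrow> 0" and "b \<longlonglongrightarrow> 0"
  shows "a n = b n"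
proof -
  define d where "d m = a m - b m" for m
  have "d (j + n) = d n" for j
  proof (induction j)
    case (Suc j)
    have "d (Suc (j + n)) = d (j + n)"
      using diff[of "j + n"] unfolding d_def by (simp add: algebra_simps)
    with Suc show ?case by simp
  qed simp
  moreover have "(\<lambda>j. d (j + n)) \<longlonglongrightarrow> 0"
    unfolding d_def using tendsto_diff[OF assms(2,3)] by (intro LIMSEQ_ignore_initial_segment) simp
  ultimately show ?thesis
    unfolding d_def by (simp add: LIMSEQ_const_iff)
qed

lemma summable_abs_suminf_le_geometric:
  fixes f :: "nat \<Rightarrow> real"
  assumes bound: "\<And>k. \<bar>f k\<bar> \<le> C * r ^ k" and "0 \<le> r" "r < 1"
  shows "summable f" and "\<bar>suminf f\<bar> \<le> C / (1 - r)"
proof -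
  have geom: "(\<lambda>k. C * r ^ k) sums (C / (1 - r))"
    using sums_mult[OF geometric_sums, of r C] assms(2,3) by (simp add: field_simps)
  have abs: "summable (\<lambda>k. \<bar>f k\<bar>)"
    by (rule summable_comparison_test'[OF sums_summable[OF geom]]) (use bound in auto)
  then show "summable f" by (rule summable_rabs_cancel)
  have "\<bar>suminf f\<bar> \<le> (\<Sum>k. \<bar>f k\<bar>)" by (rule summable_rabs[OF abs])
  also have "\<dots> \<le> C / (1 - r)"
    using bound abs geom by (metis suminf_le sums_summable sums_unique)
  finally show "\<bar>suminf f\<bar> \<le> C / (1 - r)" .
qed

lemma inverse_pochhammer_diff:
  fixes x :: "'a::field"
  assumes "pochhammer x (Suc m) \<noteq> 0"
  shows "1 / pochhammer x m - 1 / pochhammer (x + 1) m = of_nat m / pochhammer x (Suc m)"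
proof -
  have left: "pochhammer x (Suc m) = (x + of_nat m) * pochhammer x m" by (rule pochhammer_rec')
  have right: "pochhammer x (Suc m) = x * pochhammer (x + 1) m" by (rule pochhammer_rec)
  have "1 / pochhammer x m = (x + of_nat m) / pochhammer x (Suc m)"
    using assms unfolding left by simp
  moreover have "1 / pochhammer (x + 1) m = x / pochhammer x (Suc m)"
    using assms unfolding right by simp
  ultimately show ?thesis by (simp add: diff_divide_distrib[symmetric])
qed

lemma pochhammer_mono:
  fixes x y :: real
  assumes "0 < x" "x \<le> y"
  shows "pochhammer x m \<le> pochhammer y m"
proof (induction m)
  case (Suc m)
  then show ?case
    using assms by (simp add: pochhammer_rec' mult_mono pochhammer_nonneg)
qed simp

text \<open>B(x, m) = \<Gamma>(x) \<Gamma>(m) / \<Gamma>(x + m) is the Beta function at a positive integer m.\<close>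
definition beta_int :: "nat \<Rightarrow> real \<Rightarrow> real" where
  "beta_int m x = fact (m - 1) / pochhammer x m"

lemma beta_int_diff:
  assumes "1 \<le> m" "0 < x"
  shows "beta_int m x - beta_int m (x + 1) = beta_int (Suc m) x"
proof -
  obtain k where m: "m = Suc k" using assms(1) by (cases m) auto
  have "pochhammer x (Suc m) \<noteq> 0" using pochhammer_pos[OF assms(2)] by (metis less_irrefl)
  have "beta_int m x - beta_int m (x + 1) = fact k * (1 / pochhammer x m - 1 / pochhammer (x + 1) m)"
    unfolding beta_int_def m by (simp add: right_diff_distrib)
  also have "\<dots> = fact k * (of_nat m / pochhammer x (Suc m))"
    using inverse_pochhammer_diff[OF \<open>pochhammer x (Suc m) \<noteq> 0\<close>] by simp
  also have "\<dots> = beta_int (Suc m) x" unfolding beta_int_def m by simp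
  finally show ?thesis .
qed

lemma beta_int_second_diff:
  assumes "1 \<le> m" "0 < x"
  shows "beta_int (Suc (Suc m)) x = beta_int m x - 2 * beta_int m (x + 1) + beta_int m (x + 2)"
  using beta_int_diff[of "Suc m" x] beta_int_diff[of m x] beta_int_diff[of m "x + 1"] assms
  by (simp add: add.assoc)

lemma beta_int_pos: "0 < x \<Longrightarrow> 0 < beta_int m x"
  unfolding beta_int_def by (simp add: pochhammer_pos)

lemma beta_int_one: "1 \<le> m \<Longrightarrow> beta_int m 1 = 1 / real m"
  unfolding beta_int_def pochhammer_fact[symmetric] by (cases m) auto

lemma beta_int_le:
  assumes "1 \<le> m" "1 \<le> x"
  shows "beta_int m x \<le> 1 / real m"
proof -
  have "beta_int m x \<le> beta_int m 1"
    unfolding beta_int_def using assms(2)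
    by (intro divide_left_mono pochhammer_mono) (auto simp: pochhammer_pos)
  then show ?thesis using beta_int_one[OF assms(1)] by simp
qed

definition bbp_combination :: "nat \<Rightarrow> real \<Rightarrow> real" where
  "bbp_combination m x = beta_int m (x + 1) + beta_int m (x + 2) + beta_int m (x + 3) / 2
     - beta_int m (x + 5) / 4 - beta_int m (x + 6) / 4 - beta_int m (x + 7) / 8"

lemma fact_mult_bbp_term:
  "fact (2 * n - 1) * bbp_term n k = bbp_combination (2 * n) (8 * real k) / 16 ^ k"
  unfolding bbp_term_def bbp_combination_def beta_int_def by (simp add: field_simps)

lemma bbp_combination_telescopes:
  assumes "1 \<le> m" "0 \<le> x"
  shows "bbp_combination m x + bbp_combination (Suc (Suc m)) x
    = 2 * beta_int m (x + 1) - beta_int m (x + 9) / 8"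
proof -
  have "beta_int (Suc (Suc m)) (x + j) = beta_int m (x + j) - 2 * beta_int m (x + (j + 1))
      + beta_int m (x + (j + 2))" if "1 \<le> j" for j :: real
    using beta_int_second_diff[OF assms(1), of "x + j"] assms(2) that by (simp add: add.assoc)
  from this[of 1] this[of 2] this[of 3] this[of 5] this[of 6] this[of 7] show ?thesis
    unfolding bbp_combination_def by (simp add: field_simps)
qed

lemma abs_bbp_combination_le:
  assumes "1 \<le> m" "0 \<le> x"
  shows "\<bar>bbp_combination m x\<bar> \<le> 4 / real m"
proof -
  have "0 < beta_int m (x + j) \<and> beta_int m (x + j) \<le> 1 / real m" if "1 \<le> j" for j
    using beta_int_pos beta_int_le assms that by simp
  from this[of 1] this[of 2] this[of 3] this[of 5] this[of 6] this[of 7] show ?thesis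
    unfolding bbp_combination_def by (intro abs_leI) (simp_all add: field_simps)
qed

definition bbp_series :: "nat \<Rightarrow> real" where
  "bbp_series m = (\<Sum>k. bbp_combination m (8 * real k) / 16 ^ k)"

lemma bbp_series_summable_bounded:
  assumes "1 \<le> m"
  shows "summable (\<lambda>k. bbp_combination m (8 * real k) / 16 ^ k)"
    and "\<bar>bbp_series m\<bar> \<le> 64 / (15 * real m)"
proof -
  have "\<bar>bbp_combination m (8 * real k) / 16 ^ k\<bar> \<le> 4 / real m * (1 / 16) ^ k" for k
  proof -
    have "\<bar>bbp_combination m (8 * real k)\<bar> / 16 ^ k \<le> 4 / real m / 16 ^ k"
      using abs_bbp_combination_le[OF assms, of "8 * real k"] by (rule divide_right_mono) simp_all
    then show ?thesis by (simp add: abs_divide power_divide)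
  qed
  from summable_abs_suminf_le_geometric[OF this]
  show "summable (\<lambda>k. bbp_combination m (8 * real k) / 16 ^ k)"
    and "\<bar>bbp_series m\<bar> \<le> 64 / (15 * real m)"
    unfolding bbp_series_def by simp_all
qed

lemma bbp_series_tendsto_zero: "bbp_series \<longlonglongrightarrow> 0"
proof (rule Lim_null_comparison)
  show "\<forall>\<^sub>F m in sequentially. norm (bbp_series m) \<le> (64 / 15) / real m"
    using eventually_ge_at_top[of 1]
    by eventually_elim (use bbp_series_summable_bounded(2) in \<open>simp add: divide_divide_eq_left\<close>)
qed (rule lim_const_over_n)

lemma bbp_series_add_Suc_Suc:
  assumes "1 \<le> m"
  shows "bbp_series m + bbp_series (Suc (Suc m)) = 2 / real m"
proof -
  define g where "g k = 2 * beta_int m (8 * real k + 1) / 16 ^ k" for k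
  have g_bound: "norm (g k) \<le> 2 / real m * (1 / 16) ^ k" for k
  proof -
    have "2 * beta_int m (8 * real k + 1) / 16 ^ k \<le> 2 * (1 / real m) / 16 ^ k"
      by (rule divide_right_mono) (use beta_int_le[OF assms, of "8 * real k + 1"] in simp_all)
    then show ?thesis
      using beta_int_pos[of "8 * real k + 1" m] by (simp add: g_def power_divide)
  qed
  have "(\<lambda>k. 2 / real m * (1 / 16) ^ k) \<longlonglongrightarrow> 0"
    by (intro tendsto_mult_right_zero LIMSEQ_power_zero) simp
  then have "g \<longlonglongrightarrow> 0"
    by (rule Lim_null_comparison[OF always_eventually, rotated]) (use g_bound in blast)
  then have "(\<lambda>k. g k - g (Suc k)) sums (2 / real m)"
    using telescope_sums'[of g 0] beta_int_one[OF assms] by (simp add: g_def)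
  moreover have "g k - g (Suc k) = bbp_combination m (8 * real k) / 16 ^ k
      + bbp_combination (Suc (Suc m)) (8 * real k) / 16 ^ k" for k
  proof -
    have "g (Suc k) = beta_int m (8 * real k + 9) / 8 / 16 ^ k"
      unfolding g_def by (simp add: add.commute add.left_commute)
    then have "g k - g (Suc k) = (2 * beta_int m (8 * real k + 1) - beta_int m (8 * real k + 9) / 8) / 16 ^ k"
      unfolding g_def by (simp add: diff_divide_distrib)
    then show ?thesis
      by (subst add_divide_distrib[symmetric]) (simp add: bbp_combination_telescopes[OF assms])
  qed
  ultimately have "(\<lambda>k. bbp_combination m (8 * real k) / 16 ^ k
      + bbp_combination (Suc (Suc m)) (8 * real k) / 16 ^ k) sums (2 / real m)"
    by simp
  moreover have "(\<lambda>k. bbp_combination m (8 * real k) / 16 ^ k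
      + bbp_combination (Suc (Suc m)) (8 * real k) / 16 ^ k) sums (bbp_series m + bbp_series (Suc (Suc m)))"
    unfolding bbp_series_def using assms
    by (intro sums_add summable_sums bbp_series_summable_bounded(1)) auto
  ultimately show ?thesis by (rule sums_unique2[symmetric])
qed

lemma summable_alternating_harmonic: "summable (\<lambda>i. (-1) ^ (i - 1) / real i :: real)"
proof -
  have "summable (\<lambda>i. (-1) ^ (Suc i - 1) / real (Suc i) :: real)"
    using sums_summable[OF alternating_harmonic_series_sums] by simp
  then show ?thesis by (rule summable_Suc_iff[THEN iffD1])
qed

lemma sums_Rtail: "(\<lambda>j. (-1) ^ (n + j - 1) / real (n + j)) sums Rtail n"
  unfolding Rtail_def
  using summable_ignore_initial_segment[OF summable_alternating_harmonic, of n]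
  by (intro summable_sums) (simp add: add.commute)

lemma Rtail_Suc: "Rtail n = (-1) ^ (n - 1) / real n + Rtail (Suc n)"
  unfolding Rtail_def
  using suminf_shift_split_head[OF summable_alternating_harmonic, of n] by simp

lemma Rtail_tendsto_zero: "Rtail \<longlonglongrightarrow> 0"
  unfolding Rtail_def using suminf_shift_tendsto_zero[OF summable_alternating_harmonic] by simp

theorem theorem2:
  fixes n :: nat
  assumes "n \<ge> 1"
  shows "(\<lambda>j. (-1) ^ (n + j - 1) / real (n + j)) sums Rtail n
       \<and> (\<lambda>k. (-1) ^ (n - 1) * fact (2 * n - 1) * bbp_term n k) sums Rtail n"
proof -
  define S where "S m = (-1) ^ (m - 1) * bbp_series (2 * m)" for m
  have "Rtail m - Rtail (Suc m) = S m - S (Suc m)" if "n \<le> m" for m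
  proof -
    have "S m - S (Suc m) = (-1) ^ (m - 1) * (bbp_series (2 * m) + bbp_series (Suc (Suc (2 * m))))"
      using \<open>n \<ge> 1\<close> that by (cases m) (simp_all add: S_def algebra_simps)
    also have "\<dots> = (-1) ^ (m - 1) / real m"
      using bbp_series_add_Suc_Suc[of "2 * m"] \<open>n \<ge> 1\<close> that by simp
    finally show ?thesis using Rtail_Suc[of m] by simp
  qed
  moreover have "S \<longlonglongrightarrow> 0"
  proof -
    have "(\<lambda>m. bbp_series (2 * m)) \<longlonglongrightarrow> 0"
      using LIMSEQ_subseq_LIMSEQ[OF bbp_series_tendsto_zero, of "(*) 2"]
      by (simp add: strict_mono_def o_def)
    then have "(\<lambda>m. norm (S m)) \<longlonglongrightarrow> 0"
      unfolding S_def by (simp add: abs_mult tendsto_rabs_zero_iff)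
    then show ?thesis by (rule tendsto_norm_zero_cancel)
  qed
  ultimately have "Rtail n = S n"
    using eq_if_same_differences_tendsto_zero Rtail_tendsto_zero by blast
  moreover have "(\<lambda>k. (-1) ^ (n - 1) * (bbp_combination (2 * n) (8 * real k) / 16 ^ k)) sums S n"
    unfolding S_def bbp_series_def using \<open>n \<ge> 1\<close>
    by (intro sums_mult summable_sums bbp_series_summable_bounded(1)) simp
  ultimately show ?thesis
    unfolding mult.assoc fact_mult_bbp_term using sums_Rtail[of n] by simp
qed

end
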